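(* The function \[ F_0(k,a,b,c,d,e,f) = (-1)^{f}(f+2k)\,\frac{\Gamma(a+k)\Gamma(b+k)\Gamma(c+k)\Gamma(d+k)\Gamma(e+k)\Gamma(3f-a-b-c-d-e+1+k)}{\Gamma(f-a+1+k)\Gamma(f-b+1+k)\Gamma(f-c+1+k)\Gamma(f-d+1+k)\Gamma(f-e+1+k)\Gamma(a+b+c+d+e-2f+k)} \] \[ \times\frac{\Gamma(a+b+c+d-2f)\Gamma(a+b+c+e-2f)\Gamma(a+b+d+e-2f)\Gamma(a+c+d+e-2f)\Gamma(b+c+d+e-2f)}{\Gamma(a+b-f)\Gamma(a+c-f)\Gamma(a+d-f)\Gamma(a+e-f)\Gamma(b+c-f)\Gamma(b+d-f)\Gamma(b+e-f)\Gamma(c+d-f)\Gamma(c+e-f)\Gamma(d+e-f)} \] is a WZ seed in the variables $a,b,c,d,e,f$.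
   Context: A term $F(n_1,\dots,n_r)$ is hypergeometric in $n_1,\dots,n_r$ if each ratio $F(\dots,n_i+1,\dots)/F(\dots,n_i,\dots)$ is a rational function of $n_1,\dots,n_r$. Write $\Delta_n f(n)=f(n+1)-f(n)$. Two hypergeometric terms $F(n,k),G(n,k)$ form a WZ pair, and $G$ is called a WZ mate of $F$, if $\Delta_n F(n,k)=\Delta_k G(n,k)$. A hypergeometric term $F_0(k,a,b,\dots)$ (hypergeometric in $k,a,b,\dots$) is a WZ seed in the variables $a,b,\dots$ if for all integers $K,A,B,\dots$ and all complex $k_0$ and all values of the parameters $a,b,\dots$, the term $F(n,k)=F_0(Kn+k_0+k,\,An+a,\,Bn+b,\dots)$ has a WZ mate $G(n,k)$ (a hypergeometric term). Factors such as $(-1)^x$ or $z^x$ with non-integer exponent $x$ are understood as hypergeometric factors satisfying $(-1)^{x+1}=-(-1)^x$, $z^{x+1}=z\cdot z^x$ (e.g. defined via a fixed branch of the exponential). *)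

theory Defs
  imports "HOL-Analysis.Analysis"
begin

text \<open>Fixed branch: (-1)^x := exp(i pi x), so that (-1)^(x+1) = -(-1)^x.\<close>
definition neg_one_pow :: "complex \<Rightarrow> complex" where
  "neg_one_pow x = exp (\<i> * of_real pi * x)"

definition mpoly_fun :: "nat \<Rightarrow> (complex list \<Rightarrow> complex) \<Rightarrow> bool" where
  "mpoly_fun r P \<longleftrightarrow> (\<exists>S c. finite S \<and> S \<subseteq> {\<alpha>::nat list. length \<alpha> = r} \<and>
     (\<forall>x. length x = r \<longrightarrow> P x = (\<Sum>\<alpha>\<in>S. c \<alpha> * (\<Prod>i<r. x ! i ^ (\<alpha> ! i)))))"

text \<open>F is hypergeometric in its r
  variables if each shift ratio F(..,x_i+1,..)/F(..,x_i,..) equals a rational function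
  (wherever the ratio and the rational function are defined).\<close>
definition hypergeometric_in :: "nat \<Rightarrow> (complex list \<Rightarrow> complex) \<Rightarrow> bool" where
  "hypergeometric_in r F \<longleftrightarrow> (\<forall>i<r. \<exists>P Q. mpoly_fun r P \<and> mpoly_fun r Q \<and>
     (\<exists>x. length x = r \<and> Q x \<noteq> 0) \<and>
     (\<forall>x. length x = r \<and> F x \<noteq> 0 \<and> Q x \<noteq> 0 \<longrightarrow>
          F (x[i := x ! i + 1]) = P x / Q x * F x))"

definition hypergeometric2 :: "(int \<Rightarrow> int \<Rightarrow> complex) \<Rightarrow> bool" where
  "hypergeometric2 F \<longleftrightarrow>
     (\<exists>P Q. mpoly_fun 2 P \<and> mpoly_fun 2 Q \<and> (\<exists>x. length x = 2 \<and> Q x \<noteq> 0) \<and>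
       (\<forall>n k. F n k \<noteq> 0 \<and> Q [of_int n, of_int k] \<noteq> 0 \<longrightarrow>
          F (n + 1) k = P [of_int n, of_int k] / Q [of_int n, of_int k] * F n k)) \<and>
     (\<exists>P Q. mpoly_fun 2 P \<and> mpoly_fun 2 Q \<and> (\<exists>x. length x = 2 \<and> Q x \<noteq> 0) \<and>
       (\<forall>n k. F n k \<noteq> 0 \<and> Q [of_int n, of_int k] \<noteq> 0 \<longrightarrow>
          F n (k + 1) = P [of_int n, of_int k] / Q [of_int n, of_int k] * F n k))"

definition WZ_pair :: "(int \<Rightarrow> int \<Rightarrow> complex) \<Rightarrow> (int \<Rightarrow> int \<Rightarrow> complex) \<Rightarrow> bool" where
  "WZ_pair F G \<longleftrightarrow> hypergeometric2 F \<and> hypergeometric2 G \<and>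
     (\<forall>n k. F (n + 1) k - F n k = G n (k + 1) - G n k)"

definition seed_point :: "int \<Rightarrow> int list \<Rightarrow> complex \<Rightarrow> complex list \<Rightarrow> int \<Rightarrow> int \<Rightarrow> complex list" where
  "seed_point K As k0 ps n k =
     (of_int K * of_int n + k0 + of_int k) # map2 (\<lambda>A p. of_int A * of_int n + p) As ps"

text \<open>The predicate regular
  expresses that F0 is genuinely defined (no pole) at a point; the mate is required for all
  shift data and parameters for which the specialised term is defined at all integer n,k.\<close>
definition WZ_seed :: "nat \<Rightarrow> (complex list \<Rightarrow> bool) \<Rightarrow> (complex list \<Rightarrow> complex) \<Rightarrow> bool" where
  "WZ_seed r regular F0 \<longleftrightarrow> hypergeometric_in (Suc r) F0 \<and>
     (\<forall>(K::int) (As::int list) (k0::complex) (ps::complex list).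
        length As = r \<and> length ps = r \<and> (\<forall>n k. regular (seed_point K As k0 ps n k)) \<longrightarrow>
        (\<exists>G. WZ_pair (\<lambda>n k. F0 (seed_point K As k0 ps n k)) G))"

text \<open>The concrete seed. Division by Gamma at a pole gives 0, which is the correct value
  of 1/Gamma there.\<close>
definition F0 :: "complex \<Rightarrow> complex \<Rightarrow> complex \<Rightarrow> complex \<Rightarrow> complex \<Rightarrow> complex \<Rightarrow> complex \<Rightarrow> complex" where
  "F0 k a b c d e f =
     neg_one_pow f * (f + 2 * k) *
     (Gamma (a + k) * Gamma (b + k) * Gamma (c + k) * Gamma (d + k) * Gamma (e + k)
        * Gamma (3 * f - a - b - c - d - e + 1 + k))
     / (Gamma (f - a + 1 + k) * Gamma (f - b + 1 + k) * Gamma (f - c + 1 + k)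
        * Gamma (f - d + 1 + k) * Gamma (f - e + 1 + k) * Gamma (a + b + c + d + e - 2 * f + k))
     * (Gamma (a + b + c + d - 2 * f) * Gamma (a + b + c + e - 2 * f) * Gamma (a + b + d + e - 2 * f)
        * Gamma (a + c + d + e - 2 * f) * Gamma (b + c + d + e - 2 * f))
     / (Gamma (a + b - f) * Gamma (a + c - f) * Gamma (a + d - f) * Gamma (a + e - f)
        * Gamma (b + c - f) * Gamma (b + d - f) * Gamma (b + e - f) * Gamma (c + d - f)
        * Gamma (c + e - f) * Gamma (d + e - f))"

definition F0_list :: "complex list \<Rightarrow> complex" where
  "F0_list x = F0 (x!0) (x!1) (x!2) (x!3) (x!4) (x!5) (x!6)"

definition F0_num_args :: "complex \<Rightarrow> complex \<Rightarrow> complex \<Rightarrow> complex \<Rightarrow> complex \<Rightarrow> complex \<Rightarrow> complex \<Rightarrow> complex list" where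
  "F0_num_args k a b c d e f =
     [a + k, b + k, c + k, d + k, e + k, 3 * f - a - b - c - d - e + 1 + k,
      a + b + c + d - 2 * f, a + b + c + e - 2 * f, a + b + d + e - 2 * f,
      a + c + d + e - 2 * f, b + c + d + e - 2 * f]"

definition F0_regular :: "complex list \<Rightarrow> bool" where
  "F0_regular x \<longleftrightarrow>
     (\<forall>z \<in> set (F0_num_args (x!0) (x!1) (x!2) (x!3) (x!4) (x!5) (x!6)). z \<notin> \<int>\<^sub>\<le>\<^sub>0)"

end

(* In coordinates (k, a, b, c, d, e, f) the seed is (-1)^f (f + 2k) times a product of Gamma
   factors of integer linear forms. Along each of seven lattice steps forming a basis of Z^7 (the
   unit steps in k, a, b, c, d, e and the joint step of c, d, e, f) it has an explicit WZ mate of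
   the same shape: after reducing all Gamma factors to a common one, the WZ equation is a
   polynomial identity. Writing the direction (K, A_1, ..., A_6) of a lattice line as a difference
   of two nonnegative combinations of these steps and telescoping along the two corresponding
   paths yields a mate G(n, k) of F(n, k) = F_0(Kn + k_0 + k, A_1 n + a, ...). Every summand of G
   is a polynomial in (n, k) times one fixed product of Gamma factors, so G is hypergeometric.
   Regularity of the seed at all lattice points keeps the Gamma factors that get reduced away
   from their poles. *)

theory Submission
  imports Defs "HOL-Computational_Algebra.Polynomial"
begin

section \<open>Polynomial functions\<close>

definition monomial :: "nat \<Rightarrow> nat list \<Rightarrow> complex list \<Rightarrow> complex" where
  "monomial r \<alpha> x = (\<Prod>i<r. x ! i ^ (\<alpha> ! i))"

lemma mpoly_fun_iff_monomials:
  "mpoly_fun r P \<longleftrightarrow> (\<exists>S c. finite S \<and> S \<subseteq> {\<alpha>. length \<alpha> = r} \<and>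
     (\<forall>x. length x = r \<longrightarrow> P x = (\<Sum>\<alpha>\<in>S. c \<alpha> * monomial r \<alpha> x)))"
  unfolding mpoly_fun_def monomial_def by simp

lemma mpoly_fun_cong:
  assumes "mpoly_fun r P" "\<And>x. length x = r \<Longrightarrow> P x = Q x"
  shows "mpoly_fun r Q"
  using assms unfolding mpoly_fun_def by metis

lemma mpoly_fun_const: "mpoly_fun r (\<lambda>x. c)"
  unfolding mpoly_fun_iff_monomials
  by (rule exI[of _ "{replicate r 0}"], rule exI[of _ "\<lambda>_. c"]) (simp add: monomial_def)

lemma mpoly_fun_nth:
  assumes "i < r"
  shows "mpoly_fun r (\<lambda>x. x ! i)"
  unfolding mpoly_fun_iff_monomials
proof (rule exI[of _ "{(replicate r 0)[i := 1]}"], rule exI[of _ "\<lambda>_. 1"], intro conjI allI impI)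
  fix x :: "complex list"
  have "monomial r ((replicate r 0)[i := 1]) x = (\<Prod>j<r. if j = i then x ! j else 1)"
    unfolding monomial_def by (rule prod.cong) (auto simp: nth_list_update)
  also have "\<dots> = x ! i" using assms by (simp add: prod.delta)
  finally show "x ! i = (\<Sum>\<alpha>\<in>{(replicate r 0)[i := 1]}. 1 * monomial r \<alpha> x)" by simp
qed auto

lemma mpoly_fun_add:
  assumes "mpoly_fun r P" "mpoly_fun r Q"
  shows "mpoly_fun r (\<lambda>x. P x + Q x)"
proof -
  from assms(1) obtain S1 c1 where 1: "finite S1" "S1 \<subseteq> {\<alpha>. length \<alpha> = r}"
    "\<And>x. length x = r \<Longrightarrow> P x = (\<Sum>\<alpha>\<in>S1. c1 \<alpha> * monomial r \<alpha> x)"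
    unfolding mpoly_fun_iff_monomials by blast
  from assms(2) obtain S2 c2 where 2: "finite S2" "S2 \<subseteq> {\<alpha>. length \<alpha> = r}"
    "\<And>x. length x = r \<Longrightarrow> Q x = (\<Sum>\<alpha>\<in>S2. c2 \<alpha> * monomial r \<alpha> x)"
    unfolding mpoly_fun_iff_monomials by blast
  let ?c = "\<lambda>\<alpha>. (if \<alpha> \<in> S1 then c1 \<alpha> else 0) + (if \<alpha> \<in> S2 then c2 \<alpha> else 0)"
  show ?thesis unfolding mpoly_fun_iff_monomials
  proof (rule exI[of _ "S1 \<union> S2"], rule exI[of _ ?c], intro conjI allI impI)
    fix x :: "complex list" assume x: "length x = r"
    have "(\<Sum>\<alpha>\<in>S1. c1 \<alpha> * monomial r \<alpha> x) = (\<Sum>\<alpha>\<in>S1 \<union> S2. (if \<alpha> \<in> S1 then c1 \<alpha> else 0) * monomial r \<alpha> x)"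
      "(\<Sum>\<alpha>\<in>S2. c2 \<alpha> * monomial r \<alpha> x) = (\<Sum>\<alpha>\<in>S1 \<union> S2. (if \<alpha> \<in> S2 then c2 \<alpha> else 0) * monomial r \<alpha> x)"
      by (rule sum.mono_neutral_cong_left; use 1 2 in auto)+
    then show "P x + Q x = (\<Sum>\<alpha>\<in>S1 \<union> S2. ?c \<alpha> * monomial r \<alpha> x)"
      using 1(3) 2(3) x by (simp add: sum.distrib distrib_right)
  qed (use 1 2 in auto)
qed

lemma monomial_mult:
  assumes "length \<alpha> = r" "length \<beta> = r"
  shows "monomial r \<alpha> x * monomial r \<beta> x = monomial r (map2 (+) \<alpha> \<beta>) x"
  unfolding monomial_def prod.distrib[symmetric]
  by (rule prod.cong) (use assms in \<open>auto simp: power_add\<close>)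

lemma mpoly_fun_mult:
  assumes "mpoly_fun r P" "mpoly_fun r Q"
  shows "mpoly_fun r (\<lambda>x. P x * Q x)"
proof -
  from assms(1) obtain S1 c1 where 1: "finite S1" "S1 \<subseteq> {\<alpha>. length \<alpha> = r}"
    "\<And>x. length x = r \<Longrightarrow> P x = (\<Sum>\<alpha>\<in>S1. c1 \<alpha> * monomial r \<alpha> x)"
    unfolding mpoly_fun_iff_monomials by blast
  from assms(2) obtain S2 c2 where 2: "finite S2" "S2 \<subseteq> {\<alpha>. length \<alpha> = r}"
    "\<And>x. length x = r \<Longrightarrow> Q x = (\<Sum>\<alpha>\<in>S2. c2 \<alpha> * monomial r \<alpha> x)"
    unfolding mpoly_fun_iff_monomials by blast
  define h where "h = (\<lambda>(\<alpha>::nat list, \<beta>::nat list). map2 (+) \<alpha> \<beta>)"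
  define g where "g = (\<lambda>(\<alpha>, \<beta>). c1 \<alpha> * c2 \<beta>)"
  let ?c = "\<lambda>\<gamma>. \<Sum>p\<in>{p. p \<in> S1 \<times> S2 \<and> h p = \<gamma>}. g p"
  have fin: "finite (S1 \<times> S2)" using 1 2 by auto
  show ?thesis unfolding mpoly_fun_iff_monomials
  proof (rule exI[of _ "h ` (S1 \<times> S2)"], rule exI[of _ ?c], intro conjI allI impI)
    show "finite (h ` (S1 \<times> S2))" using fin by auto
    show "h ` (S1 \<times> S2) \<subseteq> {\<alpha>. length \<alpha> = r}" using 1(2) 2(2) by (fastforce simp: h_def)
    fix x :: "complex list" assume x: "length x = r"
    have "P x * Q x = (\<Sum>\<alpha>\<in>S1. \<Sum>\<beta>\<in>S2. (c1 \<alpha> * monomial r \<alpha> x) * (c2 \<beta> * monomial r \<beta> x))"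
      using 1(3) 2(3) x by (simp add: sum_product)
    also have "\<dots> = (\<Sum>p\<in>S1 \<times> S2. g p * monomial r (h p) x)"
      unfolding sum.cartesian_product
    proof (rule sum.cong[OF refl])
      fix p assume "p \<in> S1 \<times> S2"
      then obtain \<alpha> \<beta> where p: "p = (\<alpha>, \<beta>)" "\<alpha> \<in> S1" "\<beta> \<in> S2" by auto
      then have "length \<alpha> = r" "length \<beta> = r" using 1 2 by auto
      then show "(case p of (\<alpha>, \<beta>) \<Rightarrow> c1 \<alpha> * monomial r \<alpha> x * (c2 \<beta> * monomial r \<beta> x)) =
          g p * monomial r (h p) x"
        using p by (simp add: g_def h_def monomial_mult[symmetric] mult_ac)
    qed
    also have "\<dots> = (\<Sum>\<gamma>\<in>h ` (S1 \<times> S2). \<Sum>p\<in>{p. p \<in> S1 \<times> S2 \<and> h p = \<gamma>}. g p * monomial r (h p) x)"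
      by (rule sum.image_gen[OF fin])
    also have "\<dots> = (\<Sum>\<gamma>\<in>h ` (S1 \<times> S2). ?c \<gamma> * monomial r \<gamma> x)"
      by (rule sum.cong[OF refl]) (simp add: sum_distrib_right)
    finally show "P x * Q x = (\<Sum>\<gamma>\<in>h ` (S1 \<times> S2). ?c \<gamma> * monomial r \<gamma> x)" .
  qed
qed

lemma mpoly_fun_sum:
  assumes "finite A" "\<And>a. a \<in> A \<Longrightarrow> mpoly_fun r (P a)"
  shows "mpoly_fun r (\<lambda>x. \<Sum>a\<in>A. P a x)"
  using assms by (induction A rule: finite_induct) (auto intro: mpoly_fun_const mpoly_fun_add)

lemma mpoly_fun_prod:
  assumes "finite A" "\<And>a. a \<in> A \<Longrightarrow> mpoly_fun r (P a)"
  shows "mpoly_fun r (\<lambda>x. \<Prod>a\<in>A. P a x)"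
  using assms by (induction A rule: finite_induct) (auto intro: mpoly_fun_const mpoly_fun_mult)

lemma mpoly_fun_power:
  assumes "mpoly_fun r P"
  shows "mpoly_fun r (\<lambda>x. P x ^ n)"
  by (induction n) (auto intro: mpoly_fun_const mpoly_fun_mult assms)

lemma mpoly_fun_diff:
  assumes "mpoly_fun r P" "mpoly_fun r Q"
  shows "mpoly_fun r (\<lambda>x. P x - Q x)"
  using mpoly_fun_add[OF assms(1) mpoly_fun_mult[OF mpoly_fun_const[of r "-1"] assms(2)]] by simp

lemma mpoly_fun_pochhammer:
  assumes "mpoly_fun r P"
  shows "mpoly_fun r (\<lambda>x. pochhammer (P x) n)"
  unfolding pochhammer_prod by (rule mpoly_fun_prod) (auto intro: mpoly_fun_add mpoly_fun_const assms)

lemma mpoly_fun_compose: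
  assumes P: "mpoly_fun r P" and f: "\<And>j. j < r \<Longrightarrow> mpoly_fun r' (f j)"
  shows "mpoly_fun r' (\<lambda>x. P (map (\<lambda>j. f j x) [0..<r]))"
proof -
  from P obtain S c where "finite S"
    "\<And>x. length x = r \<Longrightarrow> P x = (\<Sum>\<alpha>\<in>S. c \<alpha> * monomial r \<alpha> x)"
    unfolding mpoly_fun_iff_monomials by blast
  moreover from this have "mpoly_fun r' (\<lambda>x. \<Sum>\<alpha>\<in>S. c \<alpha> * (\<Prod>i<r. f i x ^ (\<alpha> ! i)))"
    by (intro mpoly_fun_sum mpoly_fun_mult mpoly_fun_const mpoly_fun_prod mpoly_fun_power f) auto
  ultimately show ?thesis
    by (elim mpoly_fun_cong) (simp add: monomial_def)
qed

lemma mpoly_fun_on_line: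
  assumes "mpoly_fun r P" "length x = r" "length v = r"
  obtains p where "\<And>t. P (map2 (\<lambda>a b. a + t * b) x v) = poly p t"
proof -
  from assms(1) obtain S c where S: "\<And>x. length x = r \<Longrightarrow> P x = (\<Sum>\<alpha>\<in>S. c \<alpha> * monomial r \<alpha> x)"
    unfolding mpoly_fun_iff_monomials by blast
  show ?thesis
    by (rule that[of "\<Sum>\<alpha>\<in>S. smult (c \<alpha>) (\<Prod>i<r. [:x ! i, v ! i:] ^ (\<alpha> ! i))"])
       (use assms(2,3) in \<open>simp add: S monomial_def poly_sum poly_prod\<close>)
qed

text \<open>Restricting both polynomials to the line through a non-zero of each reduces this
  to the finiteness of the zeros of a univariate polynomial.\<close>
lemma mpoly_fun_mult_nonzero:
  assumes P: "mpoly_fun r P" and Q: "mpoly_fun r Q"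
    and x: "length x = r" "P x \<noteq> 0" and y: "length y = r" "Q y \<noteq> 0"
  obtains z where "length z = r" "P z * Q z \<noteq> 0"
proof -
  define v where "v = map2 (-) y x"
  have lv: "length v = r" using x y by (simp add: v_def)
  define line where "line t = map2 (\<lambda>a b. a + t * b) x v" for t :: complex
  have "line 0 = x" using x lv by (intro nth_equalityI) (auto simp: line_def)
  moreover have "line 1 = y" using x y lv by (intro nth_equalityI) (auto simp: line_def v_def)
  moreover obtain p where p: "\<And>t. P (line t) = poly p t"
    using mpoly_fun_on_line[OF P x(1) lv] unfolding line_def by blast
  moreover obtain q where q: "\<And>t. Q (line t) = poly q t"
    using mpoly_fun_on_line[OF Q x(1) lv] unfolding line_def by blast
  ultimately have "p * q \<noteq> 0" using x y by (metis mult_eq_0_iff poly_0)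
  then have "finite {t. poly (p * q) t = 0}" by (rule poly_roots_finite)
  then obtain t where "poly (p * q) t \<noteq> 0"
    using ex_new_if_finite[OF infinite_UNIV_char_0] by blast
  moreover have "length (line t) = r" using x lv by (simp add: line_def)
  ultimately show ?thesis using that p q by simp
qed

section \<open>Hypergeometric terms\<close>

definition hypergeometric_along :: "nat \<Rightarrow> nat \<Rightarrow> (complex list \<Rightarrow> complex) \<Rightarrow> bool" where
  "hypergeometric_along r i F \<longleftrightarrow> (\<exists>P Q. mpoly_fun r P \<and> mpoly_fun r Q \<and>
     (\<exists>x. length x = r \<and> Q x \<noteq> 0) \<and>
     (\<forall>x. length x = r \<and> F x \<noteq> 0 \<and> Q x \<noteq> 0 \<longrightarrow> F (x[i := x ! i + 1]) = P x / Q x * F x))"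

lemma hypergeometric_in_iff_along: "hypergeometric_in r F \<longleftrightarrow> (\<forall>i<r. hypergeometric_along r i F)"
  unfolding hypergeometric_in_def hypergeometric_along_def by simp

lemma hypergeometric_alongI:
  assumes "mpoly_fun r P" "mpoly_fun r Q" "length x0 = r" "Q x0 \<noteq> 0"
    "\<And>x. length x = r \<Longrightarrow> F x \<noteq> 0 \<Longrightarrow> Q x \<noteq> 0 \<Longrightarrow> F (x[i := x ! i + 1]) = P x / Q x * F x"
  shows "hypergeometric_along r i F"
  unfolding hypergeometric_along_def using assms by blast

lemma hypergeometric_along_cong:
  assumes "hypergeometric_along r i F" "\<And>x. length x = r \<Longrightarrow> F x = G x"
  shows "hypergeometric_along r i G"
  using assms unfolding hypergeometric_along_def by (metis length_list_update)

lemma hypergeometric_along_const: "hypergeometric_along r i (\<lambda>x. c)"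
  by (rule hypergeometric_alongI[of r "\<lambda>_. 1" "\<lambda>_. 1" "replicate r 0"]) (auto intro: mpoly_fun_const)

lemma hypergeometric_along_mult:
  assumes "hypergeometric_along r i F" "hypergeometric_along r i G"
  shows "hypergeometric_along r i (\<lambda>x. F x * G x)"
proof -
  from assms(1) obtain P1 Q1 x1 where 1: "mpoly_fun r P1" "mpoly_fun r Q1" "length x1 = r" "Q1 x1 \<noteq> 0"
    "\<forall>x. length x = r \<and> F x \<noteq> 0 \<and> Q1 x \<noteq> 0 \<longrightarrow> F (x[i := x ! i + 1]) = P1 x / Q1 x * F x"
    unfolding hypergeometric_along_def by blast
  from assms(2) obtain P2 Q2 x2 where 2: "mpoly_fun r P2" "mpoly_fun r Q2" "length x2 = r" "Q2 x2 \<noteq> 0"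
    "\<forall>x. length x = r \<and> G x \<noteq> 0 \<and> Q2 x \<noteq> 0 \<longrightarrow> G (x[i := x ! i + 1]) = P2 x / Q2 x * G x"
    unfolding hypergeometric_along_def by blast
  obtain z where "length z = r" "Q1 z * Q2 z \<noteq> 0"
    using mpoly_fun_mult_nonzero[OF 1(2) 2(2) 1(3,4) 2(3,4)] by blast
  then show ?thesis
    by (intro hypergeometric_alongI[OF mpoly_fun_mult[OF 1(1) 2(1)] mpoly_fun_mult[OF 1(2) 2(2)]])
       (use 1(5) 2(5) in auto)
qed

lemma hypergeometric_along_prod:
  assumes "finite A" "\<And>a. a \<in> A \<Longrightarrow> hypergeometric_along r i (F a)"
  shows "hypergeometric_along r i (\<lambda>x. \<Prod>a\<in>A. F a x)"
  using assms
  by (induction A rule: finite_induct) (auto intro: hypergeometric_along_const hypergeometric_along_mult)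

lemma mpoly_fun_shift:
  assumes "mpoly_fun r P" "i < r"
  shows "mpoly_fun r (\<lambda>x. P (x[i := x ! i + 1]))"
proof -
  have "mpoly_fun r (\<lambda>x. P (map (\<lambda>j. if j = i then x ! j + 1 else x ! j) [0..<r]))"
  proof (rule mpoly_fun_compose[OF assms(1)])
    fix j assume "j < r"
    then show "mpoly_fun r (\<lambda>x. if j = i then x ! j + 1 else x ! j)"
      by (cases "j = i") (auto intro: mpoly_fun_add mpoly_fun_nth mpoly_fun_const)
  qed
  then show ?thesis
    by (rule mpoly_fun_cong) (auto intro!: arg_cong[where f=P] nth_equalityI simp: nth_list_update)
qed

lemma hypergeometric_along_mpoly_fun:
  assumes "mpoly_fun r P" "i < r"
  shows "hypergeometric_along r i P"
proof (cases "\<exists>x. length x = r \<and> P x \<noteq> 0")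
  case True
  then obtain x0 where "length x0 = r" "P x0 \<noteq> 0" by blast
  then show ?thesis
    by (intro hypergeometric_alongI[OF mpoly_fun_shift[OF assms] assms(1), of x0]) auto
next
  case False
  then show ?thesis
    by (intro hypergeometric_alongI[of r "\<lambda>_. 0" "\<lambda>_. 1" "replicate r 0"]) (auto intro: mpoly_fun_const)
qed

lemma hypergeometric2_if_along:
  assumes G: "\<And>n k. G n k = F [of_int n, of_int k]"
    and "hypergeometric_along 2 0 F" "hypergeometric_along 2 1 F"
  shows "hypergeometric2 G"
proof -
  have on_lattice: "\<exists>P Q. mpoly_fun 2 P \<and> mpoly_fun 2 Q \<and> (\<exists>x. length x = 2 \<and> Q x \<noteq> 0) \<and>
      (\<forall>n k. F [of_int n, of_int k] \<noteq> 0 \<and> Q [of_int n, of_int k] \<noteq> 0 \<longrightarrow>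
         F (step n k) = P [of_int n, of_int k] / Q [of_int n, of_int k] * F [of_int n, of_int k])"
    if "hypergeometric_along 2 i F"
      and "\<And>n k. [of_int n, of_int k][i := [of_int n, of_int k] ! i + 1] = step n k" for i step
  proof -
    from that(1) obtain P Q where PQ: "mpoly_fun 2 P" "mpoly_fun 2 Q" "\<exists>x. length x = 2 \<and> Q x \<noteq> 0"
      "\<forall>x. length x = 2 \<and> F x \<noteq> 0 \<and> Q x \<noteq> 0 \<longrightarrow> F (x[i := x ! i + 1]) = P x / Q x * F x"
      unfolding hypergeometric_along_def by blast
    show ?thesis
    proof (rule exI[of _ P], rule exI[of _ Q], intro conjI allI impI PQ(1-3))
      fix n k :: int
      assume nz: "F [of_int n, of_int k] \<noteq> 0 \<and> Q [of_int n, of_int k] \<noteq> 0"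
      have "length [of_int n, of_int k :: complex] = 2" by simp
      from mp[OF spec[OF PQ(4), of "[of_int n, of_int k]"] conjI[OF this nz]]
      show "F (step n k) = P [of_int n, of_int k] / Q [of_int n, of_int k] * F [of_int n, of_int k]"
        unfolding that(2) .
    qed
  qed
  show ?thesis
    unfolding hypergeometric2_def G
    by (intro conjI on_lattice[OF assms(2)] on_lattice[OF assms(3)]) simp_all
qed

definition affine_form :: "nat \<Rightarrow> (nat \<Rightarrow> int) \<Rightarrow> complex \<Rightarrow> complex list \<Rightarrow> complex" where
  "affine_form r cs c0 x = (\<Sum>j<r. of_int (cs j) * x ! j) + c0"

lemma mpoly_fun_affine_form: "mpoly_fun r (affine_form r cs c0)"
  unfolding affine_form_def
  by (intro mpoly_fun_add mpoly_fun_sum mpoly_fun_mult mpoly_fun_const mpoly_fun_nth) auto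

lemma affine_form_shift:
  assumes "i < r" "length x = r"
  shows "affine_form r cs c0 (x[i := x ! i + 1]) = affine_form r cs c0 x + of_int (cs i)"
proof -
  have "(\<Sum>j<r. of_int (cs j) * x[i := x ! i + 1] ! j) =
        (\<Sum>j<r. of_int (cs j) * x ! j + (if j = i then of_int (cs j) else 0))"
    by (rule sum.cong) (use assms in \<open>auto simp: nth_list_update algebra_simps\<close>)
  then show ?thesis using assms by (simp add: affine_form_def sum.distrib)
qed

lemma affine_form_surj:
  assumes "i < r" "cs i \<noteq> 0"
  obtains x where "length x = r" "affine_form r cs c0 x = w"
proof -
  define x where "x = (replicate r (0::complex))[i := (w - c0) / of_int (cs i)]"
  have "(\<Sum>j<r. of_int (cs j) * x ! j) =
      (\<Sum>j<r. if j = i then of_int (cs j) * ((w - c0) / of_int (cs i)) else 0)"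
    by (rule sum.cong) (auto simp: x_def nth_list_update)
  also have "\<dots> = w - c0" using assms by simp
  finally show ?thesis using assms by (intro that[of x]) (auto simp: affine_form_def x_def)
qed

lemma neg_one_pow_add_1: "neg_one_pow (z + 1) = - neg_one_pow z"
  unfolding neg_one_pow_def by (simp add: distrib_left exp_add)

lemma neg_one_pow_add_of_int: "neg_one_pow (z + of_int d) = (if even d then 1 else -1) * neg_one_pow z"
proof (induction d rule: int_induct[where k = 0])
  case (step1 i)
  then show ?case using neg_one_pow_add_1[of "z + of_int i"] by (simp add: add_ac)
next
  case (step2 i)
  then show ?case using neg_one_pow_add_1[of "z + of_int (i - 1)"] by (auto simp: add_ac split: if_splits)
qed simp

lemma add_nonneg_notin_nonpos_Ints:
  fixes z :: complex
  assumes "z \<notin> \<int>\<^sub>\<le>\<^sub>0" "t \<ge> 0"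
  shows "z + of_int t \<notin> \<int>\<^sub>\<le>\<^sub>0"
  using nonpos_Ints_diff_Nats[of "z + of_int t" "of_int t"] assms by (auto simp: Nats_altdef1)

text \<open>Otherwise \<open>\<gamma>\<close> is an integer, and then the lattice line reaches arbitrarily negative integers.\<close>
lemma lattice_line_avoids_nonpos_Ints_add_of_int:
  fixes \<alpha> \<beta> :: int and \<gamma> :: complex
  assumes "\<alpha> \<noteq> 0 \<or> \<beta> \<noteq> 0"
    and avoid: "\<And>n k :: int. of_int \<alpha> * of_int n + of_int \<beta> * of_int k + \<gamma> \<notin> \<int>\<^sub>\<le>\<^sub>0"
  shows "of_int \<alpha> * of_int n + of_int \<beta> * of_int k + \<gamma> + of_int m \<notin> \<int>\<^sub>\<le>\<^sub>0"
proof
  assume "of_int \<alpha> * of_int n + of_int \<beta> * of_int k + \<gamma> + of_int m \<in> \<int>\<^sub>\<le>\<^sub>0"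
  then obtain t where t: "of_int \<alpha> * of_int n + of_int \<beta> * of_int k + \<gamma> + of_int m = - of_nat t"
    by (auto elim!: nonpos_Ints_cases')
  define g where "g = - int t - m - \<alpha> * n - \<beta> * k"
  have \<gamma>: "\<gamma> = of_int g"
    using t by (simp add: g_def algebra_simps eq_neg_iff_add_eq_0)
  define M where "M = \<bar>g\<bar> + 1"
  have "\<alpha> * \<alpha> + \<beta> * \<beta> \<noteq> 0" using assms(1) by (simp add: sum_squares_eq_zero_iff)
  then have "\<alpha> * \<alpha> + \<beta> * \<beta> \<ge> 1" by (smt (verit) zero_le_square)
  then have "M \<le> (\<alpha> * \<alpha> + \<beta> * \<beta>) * M" using mult_right_mono[of 1 _ M] by (simp add: M_def)
  then have "g - (\<alpha> * \<alpha> + \<beta> * \<beta>) * M \<le> 0" unfolding M_def by linarith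
  moreover have "of_int \<alpha> * of_int (- \<alpha> * M) + of_int \<beta> * of_int (- \<beta> * M) + \<gamma> =
      (of_int (g - (\<alpha> * \<alpha> + \<beta> * \<beta>) * M) :: complex)"
    unfolding \<gamma> by (simp add: algebra_simps)
  ultimately show False using avoid[of "- \<alpha> * M" "- \<beta> * M"] nonpos_Ints_of_int by metis
qed

lemma Gamma_add_of_nat:
  assumes "z \<notin> \<int>\<^sub>\<le>\<^sub>0"
  shows "Gamma (z + of_nat m) = pochhammer z m * Gamma z"
  using pochhammer_Gamma[OF assms, of m] assms by (simp add: Gamma_eq_zero_iff divide_simps)

text \<open>This holds at the poles as well: there \<open>Gamma z = 0\<close>, and either the Pochhammer symbol
  vanishes, so that its inverse is \<open>0\<close>, or \<open>z + m\<close> is a pole too.\<close>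
lemma Gamma_eq_inverse_pochhammer_mult: "Gamma z = inverse (pochhammer z m) * Gamma (z + of_nat m)"
  using arg_cong[OF pochhammer_rGamma[of z m], of inverse] by (simp add: rGamma_inverse_Gamma)

lemma pochhammer_half_nonzero: "pochhammer (1/2 :: complex) m \<noteq> 0"
proof
  assume "pochhammer (1/2 :: complex) m = 0"
  then obtain k where "(1/2 :: complex) = - of_nat k" by (auto simp: pochhammer_eq_0_iff)
  then have "Re (1/2 :: complex) = Re (- of_nat k)" by (rule arg_cong)
  then show False by simp
qed

lemma affine_form_pochhammer_nonzero:
  assumes "i < r" "cs i = 0 \<Longrightarrow> m = 0"
  obtains x where "length x = r" "pochhammer (affine_form r cs c x + d) m \<noteq> 0"
proof (cases "cs i = 0")
  case True
  then show ?thesis using assms(2) that[of "replicate r 0"] by simp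
next
  case False
  then obtain x where "length x = r" "affine_form r cs c x = 1/2 - d"
    using affine_form_surj[OF assms(1)] by metis
  then show ?thesis using that pochhammer_half_nonzero by simp
qed

lemma hypergeometric_along_neg_one_pow:
  assumes "i < r"
  shows "hypergeometric_along r i (\<lambda>x. neg_one_pow (affine_form r cs c0 x))"
  by (rule hypergeometric_alongI[of r "\<lambda>_. if even (cs i) then 1 else -1" "\<lambda>_. 1" "replicate r 0"])
     (auto intro: mpoly_fun_const simp: affine_form_shift[OF assms] neg_one_pow_add_of_int)

lemma hypergeometric_along_Gamma:
  assumes i: "i < r"
  shows "hypergeometric_along r i (\<lambda>x. Gamma (affine_form r cs c0 x))"
proof (cases "cs i \<ge> 0")
  case True
  define m where "m = nat (cs i)"
  show ?thesis
  proof (rule hypergeometric_alongI[of r "\<lambda>x. pochhammer (affine_form r cs c0 x) m" "\<lambda>_. 1" "replicate r 0"])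
    fix x :: "complex list" assume x: "length x = r" "Gamma (affine_form r cs c0 x) \<noteq> 0"
    have "affine_form r cs c0 (x[i := x ! i + 1]) = affine_form r cs c0 x + of_nat m"
      using affine_form_shift[OF i x(1)] True by (simp add: m_def)
    then show "Gamma (affine_form r cs c0 (x[i := x ! i + 1])) =
        pochhammer (affine_form r cs c0 x) m / 1 * Gamma (affine_form r cs c0 x)"
      using Gamma_add_of_nat[of "affine_form r cs c0 x" m] x(2) by (simp add: Gamma_eq_zero_iff)
  qed (auto intro: mpoly_fun_pochhammer mpoly_fun_affine_form mpoly_fun_const)
next
  case False
  define m where "m = nat (- cs i)"
  have "cs i = 0 \<Longrightarrow> m = 0" using False by simp
  then obtain x0 where "length x0 = r" "pochhammer (affine_form r cs c0 x0 + - of_nat m) m \<noteq> 0"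
    by (rule affine_form_pochhammer_nonzero[OF i])
  then show ?thesis
  proof (intro hypergeometric_alongI[of r "\<lambda>_. 1" "\<lambda>x. pochhammer (affine_form r cs c0 x - of_nat m) m" x0])
    fix x :: "complex list" assume "length x = r"
    then have "affine_form r cs c0 (x[i := x ! i + 1]) = affine_form r cs c0 x - of_nat m"
      using affine_form_shift[OF i] False by (simp add: m_def)
    then show "Gamma (affine_form r cs c0 (x[i := x ! i + 1])) =
        1 / pochhammer (affine_form r cs c0 x - of_nat m) m * Gamma (affine_form r cs c0 x)"
      using Gamma_eq_inverse_pochhammer_mult[of "affine_form r cs c0 x - of_nat m" m]
      by (simp add: divide_inverse)
  qed (intro mpoly_fun_pochhammer mpoly_fun_diff mpoly_fun_affine_form mpoly_fun_const | simp)+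
qed

lemma hypergeometric_along_rGamma:
  assumes i: "i < r"
  shows "hypergeometric_along r i (\<lambda>x. rGamma (affine_form r cs c0 x))"
proof (cases "cs i \<ge> 0")
  case True
  define m where "m = nat (cs i)"
  have "cs i = 0 \<Longrightarrow> m = 0" by (simp add: m_def)
  then obtain x0 where "length x0 = r" "pochhammer (affine_form r cs c0 x0 + 0) m \<noteq> 0"
    by (rule affine_form_pochhammer_nonzero[OF i])
  then show ?thesis
  proof (intro hypergeometric_alongI[of r "\<lambda>_. 1" "\<lambda>x. pochhammer (affine_form r cs c0 x) m" x0])
    fix x :: "complex list" assume "length x = r" "pochhammer (affine_form r cs c0 x) m \<noteq> 0"
    moreover from \<open>length x = r\<close>
    have "affine_form r cs c0 (x[i := x ! i + 1]) = affine_form r cs c0 x + of_nat m"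
      using affine_form_shift[OF i] True by (simp add: m_def)
    ultimately show "rGamma (affine_form r cs c0 (x[i := x ! i + 1])) =
        1 / pochhammer (affine_form r cs c0 x) m * rGamma (affine_form r cs c0 x)"
      using pochhammer_rGamma[of "affine_form r cs c0 x" m] by simp
  qed (auto intro: mpoly_fun_pochhammer mpoly_fun_affine_form mpoly_fun_const)
next
  case False
  define m where "m = nat (- cs i)"
  show ?thesis
  proof (rule hypergeometric_alongI[of r "\<lambda>x. pochhammer (affine_form r cs c0 x - of_nat m) m"
      "\<lambda>_. 1" "replicate r 0"])
    fix x :: "complex list" assume "length x = r"
    then have "affine_form r cs c0 (x[i := x ! i + 1]) = affine_form r cs c0 x - of_nat m"
      using affine_form_shift[OF i] False by (simp add: m_def)
    then show "rGamma (affine_form r cs c0 (x[i := x ! i + 1])) =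
        pochhammer (affine_form r cs c0 x - of_nat m) m / 1 * rGamma (affine_form r cs c0 x)"
      using pochhammer_rGamma[of "affine_form r cs c0 x - of_nat m" m] by simp
  qed (intro mpoly_fun_pochhammer mpoly_fun_diff mpoly_fun_affine_form mpoly_fun_const | simp)+
qed

section \<open>The seed and its mates for unit steps\<close>

lemma sum_lessThan_7: "(\<Sum>j<(7::nat). f j) = f 0 + f 1 + f 2 + f 3 + f 4 + f 5 + (f 6 :: 'a::comm_monoid_add)"
  by (simp add: eval_nat_numeral add_ac)

lemma prod_lessThan_11:
  "(\<Prod>j<(11::nat). f j) =
    f 0 * f 1 * f 2 * f 3 * f 4 * f 5 * f 6 * f 7 * f 8 * f 9 * (f 10 :: 'a::comm_monoid_mult)"
  by (simp add: eval_nat_numeral mult_ac)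

lemma prod_lessThan_16:
  "(\<Prod>j<(16::nat). f j) = f 0 * f 1 * f 2 * f 3 * f 4 * f 5 * f 6 * f 7 * f 8 * f 9 * f 10 *
    f 11 * f 12 * f 13 * f 14 * (f 15 :: 'a::comm_monoid_mult)"
  by (simp add: eval_nat_numeral mult_ac)

definition linear_form :: "int list \<Rightarrow> int \<Rightarrow> (nat \<Rightarrow> complex) \<Rightarrow> complex" where
  "linear_form c c0 y = (\<Sum>j<7. of_int (c ! j) * y j) + of_int c0"

definition int_linear_form :: "int list \<Rightarrow> (nat \<Rightarrow> int) \<Rightarrow> int" where
  "int_linear_form c q = (\<Sum>j<7. c ! j * q j)"

definition translate :: "(nat \<Rightarrow> complex) \<Rightarrow> (nat \<Rightarrow> int) \<Rightarrow> nat \<Rightarrow> complex" where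
  "translate y q = (\<lambda>j. y j + of_int (q j))"

lemma linear_form_translate:
  "linear_form c c0 (translate y q) = linear_form c c0 y + of_int (int_linear_form c q)"
  unfolding linear_form_def translate_def int_linear_form_def
  by (simp add: sum.distrib distrib_left algebra_simps)

lemma translate_translate: "translate (translate y p) q = translate y (\<lambda>j. p j + q j)"
  unfolding translate_def by (simp add: algebra_simps)

lemma translate_0: "translate y (\<lambda>_. 0) = y"
  unfolding translate_def by simp

text \<open>In coordinates \<open>y = (k, a, b, c, d, e, f)\<close> the seed has 11 Gamma factors in the numerator
  and 16 in the denominator, with the following coefficient rows and constants.\<close>

definition num_coeffs :: "int list list" where
  "num_coeffs = [[1,1,0,0,0,0,0], [1,0,1,0,0,0,0], [1,0,0,1,0,0,0], [1,0,0,0,1,0,0], [1,0,0,0,0,1,0],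
    [1,-1,-1,-1,-1,-1,3],
    [0,1,1,1,1,0,-2], [0,1,1,1,0,1,-2], [0,1,1,0,1,1,-2], [0,1,0,1,1,1,-2], [0,0,1,1,1,1,-2]]"

definition num_consts :: "int list" where
  "num_consts = [0,0,0,0,0,1,0,0,0,0,0]"

definition den_coeffs :: "int list list" where
  "den_coeffs = [[1,-1,0,0,0,0,1], [1,0,-1,0,0,0,1], [1,0,0,-1,0,0,1], [1,0,0,0,-1,0,1], [1,0,0,0,0,-1,1],
    [1,1,1,1,1,1,-2],
    [0,1,1,0,0,0,-1], [0,1,0,1,0,0,-1], [0,1,0,0,1,0,-1], [0,1,0,0,0,1,-1], [0,0,1,1,0,0,-1],
    [0,0,1,0,1,0,-1], [0,0,1,0,0,1,-1], [0,0,0,1,1,0,-1], [0,0,0,1,0,1,-1], [0,0,0,0,1,1,-1]]"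

definition den_consts :: "int list" where
  "den_consts = [1,1,1,1,1,0,0,0,0,0,0,0,0,0,0,0]"

definition num_arg :: "nat \<Rightarrow> (nat \<Rightarrow> complex) \<Rightarrow> complex" where
  "num_arg i = linear_form (num_coeffs ! i) (num_consts ! i)"

definition den_arg :: "nat \<Rightarrow> (nat \<Rightarrow> complex) \<Rightarrow> complex" where
  "den_arg j = linear_form (den_coeffs ! j) (den_consts ! j)"

text \<open>The shift \<open>s i\<close> applies to the \<open>i\<close>-th numerator argument for \<open>i < 11\<close> and to the
  \<open>(i - 11)\<close>-th denominator argument for \<open>11 \<le> i < 27\<close>.\<close>
definition gamma_kernel :: "(nat \<Rightarrow> complex) \<Rightarrow> (nat \<Rightarrow> int) \<Rightarrow> complex" where
  "gamma_kernel y s = (\<Prod>i<11. Gamma (num_arg i y + of_int (s i))) *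
     (\<Prod>j<16. rGamma (den_arg j y + of_int (s (11 + j))))"

definition kernel_shift :: "(nat \<Rightarrow> int) \<Rightarrow> nat \<Rightarrow> int" where
  "kernel_shift q i =
     (if i < 11 then int_linear_form (num_coeffs ! i) q else int_linear_form (den_coeffs ! (i - 11)) q)"

lemma num_arg_translate: "num_arg i (translate y q) = num_arg i y + of_int (kernel_shift q i)" if "i < 11"
  using that by (simp add: num_arg_def kernel_shift_def linear_form_translate)

lemma gamma_kernel_translate:
  "gamma_kernel (translate y q) s = gamma_kernel y (\<lambda>i. s i + kernel_shift q i)"
  unfolding gamma_kernel_def num_arg_def den_arg_def linear_form_translate kernel_shift_def
  by (simp add: add_ac)

definition kernel_ratio :: "(nat \<Rightarrow> complex) \<Rightarrow> (nat \<Rightarrow> int) \<Rightarrow> (nat \<Rightarrow> int) \<Rightarrow> complex" where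
  "kernel_ratio y s b =
     (\<Prod>i<11. pochhammer (num_arg i y + of_int (b i)) (nat (s i - b i))) *
     (\<Prod>j<16. pochhammer (den_arg j y + of_int (s (11 + j))) (nat (b (11 + j) - s (11 + j))))"

lemma gamma_kernel_reduce:
  assumes "\<And>i. i < 11 \<Longrightarrow> b i \<le> s i" "\<And>j. j < 16 \<Longrightarrow> s (11 + j) \<le> b (11 + j)"
    and "\<And>i. i < 11 \<Longrightarrow> num_arg i y + of_int (b i) \<notin> \<int>\<^sub>\<le>\<^sub>0"
  shows "gamma_kernel y s = kernel_ratio y s b * gamma_kernel y b"
proof -
  have "Gamma (num_arg i y + of_int (s i)) =
      pochhammer (num_arg i y + of_int (b i)) (nat (s i - b i)) * Gamma (num_arg i y + of_int (b i))"
    if "i < 11" for i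
  proof -
    have shift: "num_arg i y + of_int (s i) = num_arg i y + of_int (b i) + of_nat (nat (s i - b i))"
      using assms(1)[OF that] by simp
    show ?thesis unfolding shift by (rule Gamma_add_of_nat[OF assms(3)[OF that]])
  qed
  then have num: "(\<Prod>i<11. Gamma (num_arg i y + of_int (s i))) =
      (\<Prod>i<11. pochhammer (num_arg i y + of_int (b i)) (nat (s i - b i))) *
      (\<Prod>i<11. Gamma (num_arg i y + of_int (b i)))"
    unfolding prod.distrib[symmetric] by (intro prod.cong) simp_all
  have "rGamma (den_arg j y + of_int (s (11 + j))) =
      pochhammer (den_arg j y + of_int (s (11 + j))) (nat (b (11 + j) - s (11 + j))) *
      rGamma (den_arg j y + of_int (b (11 + j)))"
    if "j < 16" for j
  proof -
    have shift: "den_arg j y + of_int (b (11 + j)) =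
        den_arg j y + of_int (s (11 + j)) + of_nat (nat (b (11 + j) - s (11 + j)))"
      using assms(2)[OF that] by simp
    show ?thesis unfolding shift by (rule pochhammer_rGamma)
  qed
  then have den: "(\<Prod>j<16. rGamma (den_arg j y + of_int (s (11 + j)))) =
      (\<Prod>j<16. pochhammer (den_arg j y + of_int (s (11 + j))) (nat (b (11 + j) - s (11 + j)))) *
      (\<Prod>j<16. rGamma (den_arg j y + of_int (b (11 + j))))"
    unfolding prod.distrib[symmetric] by (intro prod.cong) simp_all
  show ?thesis unfolding gamma_kernel_def kernel_ratio_def num den by (simp add: mult_ac)
qed

text \<open>The numerator arguments \<open>i < 6\<close> contain \<open>k\<close>, so regularity along the whole lattice line
  protects them against every integer shift; the remaining ones only get shifted upwards.\<close>
definition admissible :: "(nat \<Rightarrow> complex) \<Rightarrow> bool" where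
  "admissible y \<longleftrightarrow> (\<forall>i<6. \<forall>m::int. num_arg i y + of_int m \<notin> \<int>\<^sub>\<le>\<^sub>0) \<and>
     (\<forall>i\<in>{6..<11}. num_arg i y \<notin> \<int>\<^sub>\<le>\<^sub>0)"

lemma admissible_num_arg_add:
  assumes "admissible y" "i < 11" "6 \<le> i \<Longrightarrow> m \<ge> 0"
  shows "num_arg i y + of_int m \<notin> \<int>\<^sub>\<le>\<^sub>0"
  using assms add_nonneg_notin_nonpos_Ints unfolding admissible_def
  by (cases "i < 6") auto

text \<open>Unit steps in \<open>k, a, b, c, d, e\<close> and the joint step of \<open>(c, d, e, f)\<close>: a basis of
  \<open>\<int>\<^sup>7\<close> along each of which the seed has a mate of the same shape as itself.\<close>
definition step_dir :: "nat \<Rightarrow> nat \<Rightarrow> int" where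
  "step_dir v = (if v < 6 then (\<lambda>j. if j = v then 1 else 0) else (\<lambda>j. if j \<in> {3,4,5,6} then 1 else 0))"

text \<open>Entry \<open>0\<close> of the following tables describes the seed itself, entries \<open>1\<close> to \<open>6\<close> its WZ
  mates for the steps \<open>step_dir 1, \<dots>, step_dir 6\<close> (as Gosper's algorithm produces them).\<close>
definition cert_coeffs :: "nat \<Rightarrow> int list" where
  "cert_coeffs v =
    (if v = 1 then [0,-2,-1,-1,-1,-1,3] else if v = 2 then [0,-1,-2,-1,-1,-1,3]
     else if v = 3 then [0,-1,-1,-2,-1,-1,3] else if v = 4 then [0,-1,-1,-1,-2,-1,3]
     else if v = 5 then [0,-1,-1,-1,-1,-2,3] else if v = 6 then [1,0,0,1,1,1,-1]
     else [2,0,0,0,0,0,1])"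

definition cert_shifts :: "nat \<Rightarrow> int list" where
  "cert_shifts v =
    (if v = 1 then [0,0,0,0,0,-1,0,0,0,0,0, -1,-1,-1,-1,-1,0, 1,1,1,1,0,0,0,0,0,0]
     else if v = 2 then [0,0,0,0,0,-1,0,0,0,0,0, -1,-1,-1,-1,-1,0, 1,0,0,0,1,1,1,0,0,0]
     else if v = 3 then [0,0,0,0,0,-1,0,0,0,0,0, -1,-1,-1,-1,-1,0, 0,1,0,0,1,0,0,1,1,0]
     else if v = 4 then [0,0,0,0,0,-1,0,0,0,0,0, -1,-1,-1,-1,-1,0, 0,0,1,0,0,1,0,1,0,1]
     else if v = 5 then [0,0,0,0,0,-1,0,0,0,0,0, -1,-1,-1,-1,-1,0, 0,0,0,1,0,0,1,0,1,1]
     else if v = 6 then [0,0,0,0,0,0,0,0,0,0,0, 0,0,-1,-1,-1,0, 0,0,0,0,0,0,0,1,1,1]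
     else replicate 27 0)"

definition cert_shift :: "nat \<Rightarrow> nat \<Rightarrow> int" where
  "cert_shift v i = cert_shifts v ! i"

definition wz_term :: "nat \<Rightarrow> (nat \<Rightarrow> complex) \<Rightarrow> complex" where
  "wz_term v y = neg_one_pow (y 6) * linear_form (cert_coeffs v) 0 y * gamma_kernel y (cert_shift v)"

lemma F0_eq_wz_term: "F0 (y 0) (y 1) (y 2) (y 3) (y 4) (y 5) (y 6) = wz_term 0 y"
  unfolding F0_def wz_term_def gamma_kernel_def num_arg_def den_arg_def linear_form_def
  by (simp add: sum_lessThan_7 prod_lessThan_11 prod_lessThan_16 num_coeffs_def num_consts_def
      den_coeffs_def den_consts_def cert_shift_def cert_shifts_def cert_coeffs_def
      rGamma_inverse_Gamma divide_inverse inverse_mult_distrib algebra_simps)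

lemma wz_term_translate:
  "wz_term v (translate y q) = (if even (q 6) then 1 else -1) * neg_one_pow (y 6) *
     (linear_form (cert_coeffs v) 0 y + of_int (int_linear_form (cert_coeffs v) q)) *
     gamma_kernel y (\<lambda>i. cert_shift v i + kernel_shift q i)"
  unfolding wz_term_def gamma_kernel_translate linear_form_translate
  by (simp add: translate_def neg_one_pow_add_of_int)

lemma cert_shift_eq_0: "6 \<le> i \<Longrightarrow> i < 11 \<Longrightarrow> cert_shift v i = 0"
  by (auto simp: cert_shift_def cert_shifts_def numeral_eq_Suc less_Suc_eq)

lemma kernel_shift_step_dir_nonneg:
  assumes "v < 7" "6 \<le> i" "i < 11"
  shows "kernel_shift (step_dir v) i \<ge> 0"
proof -
  have "v = 0 \<or> v = 1 \<or> v = 2 \<or> v = 3 \<or> v = 4 \<or> v = 5 \<or> v = 6" using assms(1) by presburger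
  moreover have "i = 6 \<or> i = 7 \<or> i = 8 \<or> i = 9 \<or> i = 10" using assms(2,3) by presburger
  ultimately show ?thesis
    by (elim disjE)
       (simp_all add: kernel_shift_def int_linear_form_def sum_lessThan_7 num_coeffs_def step_dir_def)
qed

definition common_shift :: "nat \<Rightarrow> nat \<Rightarrow> int" where
  "common_shift v i =
    (let s1 = cert_shift 0 i + kernel_shift (step_dir v) i; s2 = cert_shift 0 i;
         s3 = cert_shift v i + kernel_shift (step_dir 0) i; s4 = cert_shift v i
     in if i < 11 then min (min s1 s2) (min s3 s4) else max (max s1 s2) (max s3 s4))"

text \<open>All four Gamma kernels are reduced to the one with shifts \<open>common_shift v\<close>, which leaves a
  polynomial identity.\<close>
lemma wz_term_step:
  assumes y: "admissible y" and v: "v < 7"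
  shows "wz_term 0 (translate y (step_dir v)) - wz_term 0 y =
    wz_term v (translate y (step_dir 0)) - wz_term v y"
proof -
  have nonneg: "common_shift v i \<ge> 0" if "6 \<le> i" "i < 11" for i
    using that cert_shift_eq_0 kernel_shift_step_dir_nonneg[OF v] kernel_shift_step_dir_nonneg[of 0]
    by (simp add: common_shift_def Let_def)
  have reduce: "gamma_kernel y s = kernel_ratio y s (common_shift v) * gamma_kernel y (common_shift v)"
    if "s \<in> {\<lambda>i. cert_shift 0 i + kernel_shift (step_dir v) i, cert_shift 0,
              \<lambda>i. cert_shift v i + kernel_shift (step_dir 0) i, cert_shift v}" for s
  proof (rule gamma_kernel_reduce)
    show "common_shift v i \<le> s i" if "i < 11" for i
      using that \<open>s \<in> _\<close> by (auto simp: common_shift_def Let_def)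
    show "s (11 + j) \<le> common_shift v (11 + j)" for j
      using \<open>s \<in> _\<close> by (auto simp: common_shift_def Let_def)
    show "num_arg i y + of_int (common_shift v i) \<notin> \<int>\<^sub>\<le>\<^sub>0" if "i < 11" for i
      by (rule admissible_num_arg_add[OF y that]) (use nonneg that in auto)
  qed
  note tables = num_coeffs_def num_consts_def den_coeffs_def den_consts_def
    cert_coeffs_def cert_shift_def cert_shifts_def step_dir_def kernel_shift_def int_linear_form_def
    common_shift_def
  have "v = 0 \<or> v = 1 \<or> v = 2 \<or> v = 3 \<or> v = 4 \<or> v = 5 \<or> v = 6" using v by presburger
  then show ?thesis
    unfolding wz_term_translate
    unfolding wz_term_def reduce[of "\<lambda>i. cert_shift 0 i + kernel_shift (step_dir v) i", simplified]
      reduce[of "cert_shift 0", simplified] reduce[of "cert_shift v", simplified]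
      reduce[of "\<lambda>i. cert_shift v i + kernel_shift (step_dir 0) i", simplified]
    unfolding kernel_ratio_def num_arg_def den_arg_def linear_form_def
    apply (elim disjE; hypsubst_thin)
    apply (simp_all add: tables Let_def sum_lessThan_7 prod_lessThan_11 prod_lessThan_16)
    apply algebra+
    done
qed

section \<open>Telescoping along lattice paths\<close>

lemma admissible_translate:
  assumes "admissible y" "v < 7"
  shows "admissible (translate y (step_dir v))"
  unfolding admissible_def
proof (intro conjI allI impI ballI)
  fix i :: nat and m :: int assume "i < 6"
  then show "num_arg i (translate y (step_dir v)) + of_int m \<notin> \<int>\<^sub>\<le>\<^sub>0"
    using admissible_num_arg_add[OF assms(1), of i "kernel_shift (step_dir v) i + m"]
    by (simp add: num_arg_translate add.assoc)
next
  fix i :: nat assume "i \<in> {6..<11}"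
  then show "num_arg i (translate y (step_dir v)) \<notin> \<int>\<^sub>\<le>\<^sub>0"
    using admissible_num_arg_add[OF assms(1)] kernel_shift_step_dir_nonneg[OF assms(2)]
    by (simp add: num_arg_translate)
qed

fun path_mate :: "nat list \<Rightarrow> (nat \<Rightarrow> complex) \<Rightarrow> complex" where
  "path_mate [] y = 0"
| "path_mate (v # p) y = wz_term v y + path_mate p (translate y (step_dir v))"

fun path_sum :: "nat list \<Rightarrow> nat \<Rightarrow> int" where
  "path_sum [] = (\<lambda>_. 0)"
| "path_sum (v # p) = (\<lambda>j. step_dir v j + path_sum p j)"

lemma path_mate_telescope:
  assumes "set p \<subseteq> {..<7}" "admissible y"
  shows "wz_term 0 (translate y (path_sum p)) - wz_term 0 y =
    path_mate p (translate y (step_dir 0)) - path_mate p y"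
  using assms
proof (induction p arbitrary: y)
  case Nil
  then show ?case by (simp add: translate_0)
next
  case (Cons v p)
  let ?y' = "translate y (step_dir v)"
  have v: "v < 7" using Cons.prems by auto
  have "wz_term 0 (translate ?y' (path_sum p)) - wz_term 0 ?y' =
      path_mate p (translate ?y' (step_dir 0)) - path_mate p ?y'"
    using Cons.IH Cons.prems admissible_translate[OF Cons.prems(2) v] by auto
  moreover have "translate ?y' (step_dir 0) = translate (translate y (step_dir 0)) (step_dir v)"
    by (simp add: translate_translate add.commute)
  moreover have "translate ?y' (path_sum p) = translate y (path_sum (v # p))"
    by (simp add: translate_translate)
  ultimately show ?case
    using wz_term_step[OF Cons.prems(2) v] by (simp add: algebra_simps)
qed

definition linear_forms_affine :: "nat \<Rightarrow> (complex list \<Rightarrow> nat \<Rightarrow> complex) \<Rightarrow> bool" where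
  "linear_forms_affine r Y \<longleftrightarrow>
     (\<forall>c c0. \<exists>cs cc. \<forall>x. length x = r \<longrightarrow> linear_form c c0 (Y x) = affine_form r cs cc x)"

lemma
  assumes "linear_forms_affine r Y"
  shows mpoly_fun_linear_form: "mpoly_fun r (\<lambda>x. linear_form c c0 (Y x))"
    and hypergeometric_along_Gamma_linear_form:
      "i < r \<Longrightarrow> hypergeometric_along r i (\<lambda>x. Gamma (linear_form c c0 (Y x) + d))"
    and hypergeometric_along_rGamma_linear_form:
      "i < r \<Longrightarrow> hypergeometric_along r i (\<lambda>x. rGamma (linear_form c c0 (Y x) + d))"
    and hypergeometric_along_neg_one_pow_linear_form:
      "i < r \<Longrightarrow> hypergeometric_along r i (\<lambda>x. neg_one_pow (linear_form c c0 (Y x)))"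
proof -
  obtain cs cc where Y: "\<And>x. length x = r \<Longrightarrow> linear_form c c0 (Y x) = affine_form r cs cc x"
    using assms unfolding linear_forms_affine_def by blast
  have shifted: "affine_form r cs cc x + d = affine_form r cs (cc + d) x" for x
    unfolding affine_form_def by (simp add: add.assoc)
  show "mpoly_fun r (\<lambda>x. linear_form c c0 (Y x))"
    by (rule mpoly_fun_cong[OF mpoly_fun_affine_form]) (simp add: Y)
  assume i: "i < r"
  show "hypergeometric_along r i (\<lambda>x. Gamma (linear_form c c0 (Y x) + d))"
    by (rule hypergeometric_along_cong[OF hypergeometric_along_Gamma[OF i]]) (simp add: Y shifted)
  show "hypergeometric_along r i (\<lambda>x. rGamma (linear_form c c0 (Y x) + d))"
    by (rule hypergeometric_along_cong[OF hypergeometric_along_rGamma[OF i]]) (simp add: Y shifted)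
  show "hypergeometric_along r i (\<lambda>x. neg_one_pow (linear_form c c0 (Y x)))"
    by (rule hypergeometric_along_cong[OF hypergeometric_along_neg_one_pow[OF i]]) (simp add: Y)
qed

lemma hypergeometric_along_wz_term:
  assumes "linear_forms_affine r Y" "i < r"
  shows "hypergeometric_along r i (\<lambda>x. wz_term v (Y x))"
proof -
  have "y 6 = linear_form [0,0,0,0,0,0,1] 0 y" for y
    by (simp add: linear_form_def sum_lessThan_7)
  moreover have "hypergeometric_along r i (\<lambda>x. neg_one_pow (linear_form [0,0,0,0,0,0,1] 0 (Y x)) *
      linear_form (cert_coeffs v) 0 (Y x) *
      ((\<Prod>a<11. Gamma (linear_form (num_coeffs ! a) (num_consts ! a) (Y x) + of_int (cert_shift v a))) *
       (\<Prod>a<16. rGamma (linear_form (den_coeffs ! a) (den_consts ! a) (Y x) +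
          of_int (cert_shift v (11 + a))))))"
    by (intro hypergeometric_along_mult hypergeometric_along_prod hypergeometric_along_mpoly_fun
        hypergeometric_along_neg_one_pow_linear_form hypergeometric_along_Gamma_linear_form
        hypergeometric_along_rGamma_linear_form mpoly_fun_linear_form assms) auto
  ultimately show ?thesis
    by (elim hypergeometric_along_cong) (simp add: wz_term_def gamma_kernel_def num_arg_def den_arg_def)
qed

lemma F0_list_hypergeometric: "hypergeometric_in 7 F0_list"
  unfolding hypergeometric_in_iff_along
proof (intro allI impI)
  fix i :: nat assume "i < 7"
  moreover have "linear_forms_affine 7 (\<lambda>x j. x ! j)"
    unfolding linear_forms_affine_def linear_form_def affine_form_def by fastforce
  ultimately have "hypergeometric_along 7 i (\<lambda>x. wz_term 0 (\<lambda>j. x ! j))"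
    by (intro hypergeometric_along_wz_term)
  then show "hypergeometric_along 7 i F0_list"
    by (rule hypergeometric_along_cong) (simp add: F0_list_def flip: F0_eq_wz_term)
qed

section \<open>WZ mates on lattice lines\<close>

lemma int_linear_form_abs_le:
  assumes "\<And>j. j < 7 \<Longrightarrow> \<bar>q j\<bar> \<le> M"
  shows "\<bar>int_linear_form c q\<bar> \<le> (\<Sum>j<7. \<bar>c ! j\<bar>) * M"
proof -
  have "\<bar>int_linear_form c q\<bar> \<le> (\<Sum>j<7. \<bar>c ! j\<bar> * \<bar>q j\<bar>)"
    unfolding int_linear_form_def abs_mult[symmetric] by (rule sum_abs)
  also have "\<dots> \<le> (\<Sum>j<7. \<bar>c ! j\<bar> * M)"
    by (intro sum_mono mult_left_mono) (simp_all add: assms)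
  finally show ?thesis by (simp add: sum_distrib_right)
qed

lemma kernel_shift_abs_le:
  assumes "\<And>j. j < 7 \<Longrightarrow> \<bar>q j\<bar> \<le> M" "i < 27"
  shows "\<bar>kernel_shift q i\<bar> \<le> 9 * M"
proof -
  define c where "c = (if i < 11 then num_coeffs ! i else den_coeffs ! (i - 11))"
  have "length num_coeffs = 11" "length den_coeffs = 16"
    by (simp_all add: num_coeffs_def den_coeffs_def)
  then have "c \<in> set num_coeffs \<union> set den_coeffs"
    using assms(2) unfolding c_def by (auto intro!: nth_mem)
  then have "(\<Sum>j<7. \<bar>c ! j\<bar>) \<le> 9"
    by (auto simp: num_coeffs_def den_coeffs_def sum_lessThan_7)
  moreover have "M \<ge> 0" using assms(1)[of 0] by simp
  ultimately have "(\<Sum>j<7. \<bar>c ! j\<bar>) * M \<le> 9 * M" by (rule mult_right_mono)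
  moreover have "kernel_shift q i = int_linear_form c q" by (simp add: kernel_shift_def c_def)
  moreover have "\<bar>int_linear_form c q\<bar> \<le> (\<Sum>j<7. \<bar>c ! j\<bar>) * M"
    by (rule int_linear_form_abs_le) (rule assms(1))
  ultimately show ?thesis by linarith
qed

lemma cert_shift_abs_le:
  assumes "i < 27"
  shows "\<bar>cert_shift v i\<bar> \<le> 1"
proof -
  have "cert_shifts v ! i \<in> set (cert_shifts v)" using assms by (intro nth_mem) (simp add: cert_shifts_def)
  moreover have "set (cert_shifts v) \<subseteq> {-1, 0, 1}" by (simp add: cert_shifts_def)
  ultimately show ?thesis unfolding cert_shift_def by auto
qed

lemma step_dir_abs_le: "\<bar>step_dir v j\<bar> \<le> 1"
  by (simp add: step_dir_def)

definition dir_path :: "(nat \<Rightarrow> nat) \<Rightarrow> nat list" where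
  "dir_path f = concat (map (\<lambda>v. replicate (f v) v) [0..<7])"

lemma set_dir_path: "set (dir_path f) \<subseteq> {..<7}"
  by (auto simp: dir_path_def)

lemma path_sum_append: "path_sum (p @ p') j = path_sum p j + path_sum p' j"
  by (induction p) auto

lemma path_sum_dir_path: "path_sum (dir_path f) j = (\<Sum>v<7. int (f v) * step_dir v j)"
proof -
  have "path_sum (replicate m v) j = int m * step_dir v j" for m v
    by (induction m) (auto simp: algebra_simps)
  then have "path_sum (concat (map (\<lambda>v. replicate (f v) v) vs)) j = (\<Sum>v\<leftarrow>vs. int (f v) * step_dir v j)" for vs
    by (induction vs) (auto simp: path_sum_append)
  then show ?thesis
    by (simp add: dir_path_def sum_list_distinct_conv_sum_set atLeast0LessThan)
qed

lemma num_arg_eq_F0_num_args: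
  assumes "i < 11"
  shows "num_arg i y = F0_num_args (y 0) (y 1) (y 2) (y 3) (y 4) (y 5) (y 6) ! i"
proof -
  have "i = 0 \<or> i = 1 \<or> i = 2 \<or> i = 3 \<or> i = 4 \<or> i = 5 \<or> i = 6 \<or> i = 7 \<or> i = 8 \<or> i = 9 \<or> i = 10"
    using assms by presburger
  then show ?thesis
    by (elim disjE) (simp_all add: num_arg_def linear_form_def sum_lessThan_7 num_coeffs_def num_consts_def
        F0_num_args_def algebra_simps)
qed

context
  fixes K :: int and As :: "int list" and k0 :: complex and ps :: "complex list"
  assumes lengths: "length As = 6" "length ps = 6"
    and regular: "\<And>n k. F0_regular (seed_point K As k0 ps n k)"
begin

definition line_dir :: "nat \<Rightarrow> int" where
  "line_dir j = (if j = 0 then K else if j < 7 then As ! (j - 1) else 0)"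

definition line_base :: "nat \<Rightarrow> complex" where
  "line_base j = (if j = 0 then k0 else if j < 7 then ps ! (j - 1) else 0)"

definition line_point :: "complex list \<Rightarrow> nat \<Rightarrow> complex" where
  "line_point x j = of_int (line_dir j) * x ! 0 + (if j = 0 then x ! 1 else 0) + line_base j"

abbreviation lattice_point :: "int \<Rightarrow> int \<Rightarrow> nat \<Rightarrow> complex" where
  "lattice_point n k \<equiv> line_point [of_int n, of_int k]"

lemma lattice_point_Suc_n: "lattice_point (n + 1) k = translate (lattice_point n k) line_dir"
  unfolding line_point_def translate_def by (auto simp: algebra_simps)

lemma lattice_point_Suc_k: "lattice_point n (k + 1) = translate (lattice_point n k) (step_dir 0)"
  unfolding line_point_def translate_def step_dir_def by (auto simp: algebra_simps)

lemma linear_form_line_point: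
  "linear_form c c0 (line_point x) =
     of_int (int_linear_form c line_dir) * x ! 0 + of_int (c ! 0) * x ! 1 + linear_form c c0 line_base"
  unfolding linear_form_def int_linear_form_def line_point_def sum_lessThan_7 by (simp add: algebra_simps)

lemma linear_forms_affine_line_point: "linear_forms_affine 2 line_point"
  unfolding linear_forms_affine_def
proof (intro allI)
  fix c :: "int list" and c0 :: int
  show "\<exists>cs cc. \<forall>x. length x = 2 \<longrightarrow> linear_form c c0 (line_point x) = affine_form 2 cs cc x"
    by (rule exI[of _ "\<lambda>j. if j = 0 then int_linear_form c line_dir else c ! 0"],
        rule exI[of _ "linear_form c c0 line_base"])
       (simp add: linear_form_line_point affine_form_def numeral_2_eq_2 lessThan_Suc)
qed

lemma seed_point_nth: "j < 7 \<Longrightarrow> seed_point K As k0 ps n k ! j = lattice_point n k j"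
  using lengths
  by (cases j) (auto simp: seed_point_def line_point_def line_dir_def line_base_def algebra_simps)

lemma F0_list_seed_point: "F0_list (seed_point K As k0 ps n k) = wz_term 0 (lattice_point n k)"
  unfolding F0_eq_wz_term[symmetric] F0_list_def by (simp add: seed_point_nth)

lemma num_arg_lattice_point: "i < 11 \<Longrightarrow> num_arg i (lattice_point n k) \<notin> \<int>\<^sub>\<le>\<^sub>0"
proof -
  assume i: "i < 11"
  let ?x = "seed_point K As k0 ps n k"
  have "num_arg i (lattice_point n k) = F0_num_args (?x!0) (?x!1) (?x!2) (?x!3) (?x!4) (?x!5) (?x!6) ! i"
    unfolding num_arg_eq_F0_num_args[OF i] by (simp add: seed_point_nth)
  moreover have "length (F0_num_args (?x!0) (?x!1) (?x!2) (?x!3) (?x!4) (?x!5) (?x!6)) = 11"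
    by (simp add: F0_num_args_def)
  ultimately show ?thesis using regular[of n k] i unfolding F0_regular_def by (metis nth_mem)
qed

lemma admissible_lattice_point: "admissible (lattice_point n k)"
  unfolding admissible_def
proof (intro conjI allI impI ballI)
  fix i :: nat and m :: int assume i: "i < 6"
  have "num_coeffs ! i ! 0 = 1"
    using i by (auto simp: num_coeffs_def less_Suc_eq numeral_eq_Suc)
  then have "num_arg i (lattice_point n (k + m)) = num_arg i (lattice_point n k) + of_int m"
    unfolding num_arg_def linear_form_line_point by (simp add: algebra_simps)
  then show "num_arg i (lattice_point n k) + of_int m \<notin> \<int>\<^sub>\<le>\<^sub>0"
    using num_arg_lattice_point[of i n "k + m"] i by simp
qed (simp add: num_arg_lattice_point)

text \<open>The coordinates of \<open>line_dir\<close> in the basis \<open>step_dir 0, \<dots>, step_dir 6\<close>.\<close>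
definition line_coords :: "nat \<Rightarrow> int" where
  "line_coords v = [K, As ! 0, As ! 1, As ! 2 - As ! 5, As ! 3 - As ! 5, As ! 4 - As ! 5, As ! 5] ! v"

definition up_path :: "nat list" where
  "up_path = dir_path (\<lambda>v. nat (line_coords v))"

definition down_path :: "nat list" where
  "down_path = dir_path (\<lambda>v. nat (- line_coords v))"

lemma path_sum_up_path: "path_sum up_path j = line_dir j + path_sum down_path j"
proof -
  have "j = 0 \<or> j = 1 \<or> j = 2 \<or> j = 3 \<or> j = 4 \<or> j = 5 \<or> j = 6 \<or> j \<ge> 7" by presburger
  then show ?thesis
    unfolding up_path_def down_path_def path_sum_dir_path
    by (elim disjE) (auto simp: sum_lessThan_7 step_dir_def line_dir_def line_coords_def algebra_simps)
qed

definition wz_mate :: "int \<Rightarrow> int \<Rightarrow> complex" where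
  "wz_mate n k = path_mate up_path (lattice_point n k) - path_mate down_path (lattice_point (n + 1) k)"

text \<open>Both paths lead to the same point, one from \<open>(n, k)\<close> and one from \<open>(n + 1, k)\<close>.\<close>
lemma wz_mate_equation:
  "wz_term 0 (lattice_point (n + 1) k) - wz_term 0 (lattice_point n k) = wz_mate n (k + 1) - wz_mate n k"
proof -
  let ?y = "lattice_point n k" and ?y' = "lattice_point (n + 1) k"
  have up: "wz_term 0 (translate ?y (path_sum up_path)) - wz_term 0 ?y =
      path_mate up_path (translate ?y (step_dir 0)) - path_mate up_path ?y"
    by (rule path_mate_telescope[OF _ admissible_lattice_point]) (simp add: up_path_def set_dir_path)
  have down: "wz_term 0 (translate ?y' (path_sum down_path)) - wz_term 0 ?y' =
      path_mate down_path (translate ?y' (step_dir 0)) - path_mate down_path ?y'"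
    by (rule path_mate_telescope[OF _ admissible_lattice_point]) (simp add: down_path_def set_dir_path)
  have same_end: "translate ?y' (path_sum down_path) = translate ?y (path_sum up_path)"
    unfolding lattice_point_Suc_n translate_translate path_sum_up_path by simp
  from up down[unfolded same_end] have "wz_term 0 ?y' - wz_term 0 ?y =
      (path_mate up_path (translate ?y (step_dir 0)) - path_mate down_path (translate ?y' (step_dir 0))) -
      (path_mate up_path ?y - path_mate down_path ?y')"
    by algebra
  then show ?thesis unfolding wz_mate_def lattice_point_Suc_k .
qed


definition moving :: "nat \<Rightarrow> bool" where
  "moving i \<longleftrightarrow> int_linear_form (num_coeffs ! i) line_dir \<noteq> 0 \<or> num_coeffs ! i ! 0 \<noteq> 0"

definition shift_bound :: int where
  "shift_bound = int (length up_path) + int (length down_path) + (\<Sum>j<7. \<bar>line_dir j\<bar>)"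

definition depth :: nat where
  "depth = nat (9 * shift_bound + 1)"

text \<open>Along both paths no Gamma argument is shifted by more than \<open>depth\<close>, so every Gamma kernel
  that occurs is a polynomial multiple of the following one. Numerator factors that do not move
  along the lattice are kept in the (then constant) cofactor instead.\<close>
definition base_kernel :: "complex list \<Rightarrow> complex" where
  "base_kernel x = (\<Prod>i<11. if moving i then Gamma (num_arg i (line_point x) - of_nat depth) else 1) *
     (\<Prod>j<16. rGamma (den_arg j (line_point x) + of_nat depth))"

definition kernel_cofactor :: "(nat \<Rightarrow> int) \<Rightarrow> complex list \<Rightarrow> complex" where
  "kernel_cofactor s x =
     (\<Prod>i<11. if moving i then pochhammer (num_arg i (line_point x) - of_nat depth) (nat (s i + int depth))
              else Gamma (num_arg i (line_point x) + of_int (s i))) *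
     (\<Prod>j<16. pochhammer (den_arg j (line_point x) + of_int (s (11 + j))) (nat (int depth - s (11 + j))))"

definition base_term :: "complex list \<Rightarrow> complex" where
  "base_term x = neg_one_pow (line_point x 6) * base_kernel x"

definition poly_multiple :: "(int \<Rightarrow> int \<Rightarrow> complex) \<Rightarrow> bool" where
  "poly_multiple H \<longleftrightarrow>
     (\<exists>P. mpoly_fun 2 P \<and> (\<forall>n k. H n k = P [of_int n, of_int k] * base_term [of_int n, of_int k]))"

lemma num_arg_line_point:
  "num_arg i (line_point x) =
     of_int (int_linear_form (num_coeffs ! i) line_dir) * x ! 0 + of_int (num_coeffs ! i ! 0) * x ! 1 +
     num_arg i line_base"
  unfolding num_arg_def by (rule linear_form_line_point)

lemma gamma_kernel_lattice_point:
  assumes bound: "\<And>i. i < 27 \<Longrightarrow> \<bar>s i\<bar> \<le> int depth"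
  shows "gamma_kernel (lattice_point n k) s =
    kernel_cofactor s [of_int n, of_int k] * base_kernel [of_int n, of_int k]"
proof -
  let ?y = "lattice_point n k"
  have num: "Gamma (num_arg i ?y + of_int (s i)) =
      (if moving i then pochhammer (num_arg i ?y - of_nat depth) (nat (s i + int depth))
       else Gamma (num_arg i ?y + of_int (s i))) *
      (if moving i then Gamma (num_arg i ?y - of_nat depth) else 1)" if i: "i < 11" for i
  proof (cases "moving i")
    case True
    have "num_arg i ?y = of_int (int_linear_form (num_coeffs ! i) line_dir) * of_int n +
        of_int (num_coeffs ! i ! 0) * of_int k + num_arg i line_base"
      by (simp add: num_arg_line_point)
    moreover have "\<dots> + of_int (- int depth) \<notin> \<int>\<^sub>\<le>\<^sub>0"
    proof (rule lattice_line_avoids_nonpos_Ints_add_of_int)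
      show "int_linear_form (num_coeffs ! i) line_dir \<noteq> 0 \<or> num_coeffs ! i ! 0 \<noteq> 0"
        using True by (simp add: moving_def)
      show "of_int (int_linear_form (num_coeffs ! i) line_dir) * of_int n' +
          of_int (num_coeffs ! i ! 0) * of_int k' + num_arg i line_base \<notin> \<int>\<^sub>\<le>\<^sub>0" for n' k'
        using num_arg_lattice_point[OF i, of n' k'] unfolding num_arg_line_point by simp
    qed
    ultimately have nonpole: "num_arg i ?y - of_nat depth \<notin> \<int>\<^sub>\<le>\<^sub>0" by simp
    have shift: "num_arg i ?y + of_int (s i) =
        (num_arg i ?y - of_nat depth) + of_nat (nat (s i + int depth))"
      using bound[of i] i by simp
    have "Gamma (num_arg i ?y + of_int (s i)) =
        pochhammer (num_arg i ?y - of_nat depth) (nat (s i + int depth)) *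
        Gamma (num_arg i ?y - of_nat depth)"
      unfolding shift by (rule Gamma_add_of_nat[OF nonpole])
    with True show ?thesis by simp
  qed simp
  have den: "rGamma (den_arg j ?y + of_int (s (11 + j))) =
      pochhammer (den_arg j ?y + of_int (s (11 + j))) (nat (int depth - s (11 + j))) *
      rGamma (den_arg j ?y + of_nat depth)" if "j < 16" for j
  proof -
    have shift: "den_arg j ?y + of_nat depth =
        (den_arg j ?y + of_int (s (11 + j))) + of_nat (nat (int depth - s (11 + j)))"
      using bound[of "11 + j"] that by simp
    show ?thesis unfolding shift by (rule pochhammer_rGamma)
  qed
  have "(\<Prod>i<11. Gamma (num_arg i ?y + of_int (s i))) =
     (\<Prod>i<11. if moving i then pochhammer (num_arg i ?y - of_nat depth) (nat (s i + int depth))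
              else Gamma (num_arg i ?y + of_int (s i))) *
     (\<Prod>i<11. if moving i then Gamma (num_arg i ?y - of_nat depth) else 1)"
    unfolding prod.distrib[symmetric] by (rule prod.cong) (simp_all add: num)
  moreover have "(\<Prod>j<16. rGamma (den_arg j ?y + of_int (s (11 + j)))) =
     (\<Prod>j<16. pochhammer (den_arg j ?y + of_int (s (11 + j))) (nat (int depth - s (11 + j)))) *
     (\<Prod>j<16. rGamma (den_arg j ?y + of_nat depth))"
    unfolding prod.distrib[symmetric] by (rule prod.cong) (simp_all add: den)
  ultimately show ?thesis
    unfolding gamma_kernel_def kernel_cofactor_def base_kernel_def by (simp add: mult_ac)
qed

lemma mpoly_fun_kernel_cofactor: "mpoly_fun 2 (kernel_cofactor s)"
proof -
  have "mpoly_fun 2 (\<lambda>x. if moving i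
      then pochhammer (num_arg i (line_point x) - of_nat depth) (nat (s i + int depth))
      else Gamma (num_arg i (line_point x) + of_int (s i)))" for i
  proof (cases "moving i")
    case True
    then show ?thesis unfolding num_arg_def
      by (simp add: mpoly_fun_pochhammer mpoly_fun_diff mpoly_fun_const
          mpoly_fun_linear_form[OF linear_forms_affine_line_point])
  next
    case False
    then have "num_arg i (line_point x) = num_arg i line_base" for x
      by (simp add: num_arg_line_point moving_def)
    then show ?thesis using False by (simp add: mpoly_fun_const)
  qed
  moreover have "mpoly_fun 2 (\<lambda>x. pochhammer (den_arg j (line_point x) + of_int (s (11 + j)))
      (nat (int depth - s (11 + j))))" for j
    unfolding den_arg_def
    by (intro mpoly_fun_pochhammer mpoly_fun_add mpoly_fun_linear_form[OF linear_forms_affine_line_point]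
        mpoly_fun_const)
  ultimately show ?thesis
    unfolding kernel_cofactor_def by (intro mpoly_fun_mult mpoly_fun_prod) auto
qed

lemma hypergeometric_along_base_term:
  assumes "i < 2"
  shows "hypergeometric_along 2 i base_term"
proof -
  note affine = linear_forms_affine_line_point
  have "hypergeometric_along 2 i
      (\<lambda>x. if moving a then Gamma (num_arg a (line_point x) - of_nat depth) else 1)" for a
    using hypergeometric_along_Gamma_linear_form[OF affine assms,
        of "num_coeffs ! a" "num_consts ! a" "- of_nat depth"]
    by (cases "moving a") (simp_all add: num_arg_def hypergeometric_along_const)
  moreover have "hypergeometric_along 2 i (\<lambda>x. rGamma (den_arg j (line_point x) + of_nat depth))" for j
    unfolding den_arg_def by (rule hypergeometric_along_rGamma_linear_form[OF affine assms])
  moreover have "hypergeometric_along 2 i (\<lambda>x. neg_one_pow (line_point x 6))"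
    using hypergeometric_along_neg_one_pow_linear_form[OF affine assms, of "[0,0,0,0,0,0,1]" 0]
    by (simp add: linear_form_def sum_lessThan_7)
  ultimately show ?thesis
    unfolding base_term_def base_kernel_def
    by (intro hypergeometric_along_mult hypergeometric_along_prod) auto
qed

lemma poly_multiple_wz_term:
  assumes "\<And>j. j < 7 \<Longrightarrow> \<bar>q j\<bar> \<le> shift_bound"
  shows "poly_multiple (\<lambda>n k. wz_term v (translate (lattice_point n k) q))"
proof -
  define s where "s = (\<lambda>i. cert_shift v i + kernel_shift q i)"
  define P where "P x = (if even (q 6) then 1 else -1) *
    (linear_form (cert_coeffs v) 0 (line_point x) + of_int (int_linear_form (cert_coeffs v) q)) *
    kernel_cofactor s x" for x
  have "\<bar>s i\<bar> \<le> int depth" if "i < 27" for i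
    using cert_shift_abs_le[OF that, of v] kernel_shift_abs_le[of q shift_bound i, OF assms that]
    unfolding s_def depth_def by linarith
  then have "wz_term v (translate (lattice_point n k) q) =
      P [of_int n, of_int k] * base_term [of_int n, of_int k]" for n k
    using gamma_kernel_lattice_point[of s n k]
    unfolding wz_term_translate P_def base_term_def s_def by (simp add: mult_ac)
  moreover have "mpoly_fun 2 P"
    unfolding P_def by (intro mpoly_fun_mult mpoly_fun_const mpoly_fun_add mpoly_fun_kernel_cofactor
        mpoly_fun_linear_form[OF linear_forms_affine_line_point])
  ultimately show ?thesis unfolding poly_multiple_def by blast
qed

lemma poly_multiple_add:
  "poly_multiple F \<Longrightarrow> poly_multiple G \<Longrightarrow> poly_multiple (\<lambda>n k. F n k + G n k)"
  unfolding poly_multiple_def by (metis (no_types, lifting) mpoly_fun_add distrib_right)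

lemma poly_multiple_path_mate:
  "set p \<subseteq> {..<7} \<Longrightarrow> (\<And>j. j < 7 \<Longrightarrow> \<bar>q j\<bar> + int (length p) \<le> shift_bound) \<Longrightarrow>
    poly_multiple (\<lambda>n k. path_mate p (translate (lattice_point n k) q))"
proof (induction p arbitrary: q)
  case Nil
  then show ?case unfolding poly_multiple_def by (auto intro: mpoly_fun_const)
next
  case (Cons v p)
  have "poly_multiple (\<lambda>n k. wz_term v (translate (lattice_point n k) q))"
    by (rule poly_multiple_wz_term) (use Cons.prems(2) in force)
  moreover have "poly_multiple (\<lambda>n k. path_mate p (translate (lattice_point n k) (\<lambda>j. q j + step_dir v j)))"
  proof (rule Cons.IH)
    show "set p \<subseteq> {..<7}" using Cons.prems by auto
    show "\<bar>q j + step_dir v j\<bar> + int (length p) \<le> shift_bound" if "j < 7" for j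
      using Cons.prems(2)[OF that] step_dir_abs_le[of v j] by simp
  qed
  ultimately show ?case by (simp add: poly_multiple_add translate_translate)
qed

lemma hypergeometric2_wz_mate: "hypergeometric2 wz_mate"
proof -
  have "poly_multiple (\<lambda>n k. path_mate up_path (translate (lattice_point n k) (\<lambda>_. 0)))"
    by (rule poly_multiple_path_mate)
       (auto simp: up_path_def set_dir_path shift_bound_def intro: sum_nonneg)
  moreover have "poly_multiple (\<lambda>n k. path_mate down_path (translate (lattice_point n k) line_dir))"
  proof (rule poly_multiple_path_mate)
    show "set down_path \<subseteq> {..<7}" by (simp add: down_path_def set_dir_path)
    show "\<bar>line_dir j\<bar> + int (length down_path) \<le> shift_bound" if "j < 7" for j
      using member_le_sum[of j "{..<7}" "\<lambda>j. \<bar>line_dir j\<bar>"] that by (simp add: shift_bound_def)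
  qed
  ultimately have "poly_multiple wz_mate"
    unfolding poly_multiple_def wz_mate_def translate_0 lattice_point_Suc_n
    by (metis (no_types, lifting) mpoly_fun_diff left_diff_distrib)
  then obtain P where "mpoly_fun 2 P"
    "\<And>n k. wz_mate n k = P [of_int n, of_int k] * base_term [of_int n, of_int k]"
    unfolding poly_multiple_def by blast
  then show ?thesis
    by (intro hypergeometric2_if_along[where F = "\<lambda>x. P x * base_term x"])
       (simp_all add: hypergeometric_along_mult hypergeometric_along_mpoly_fun hypergeometric_along_base_term)
qed

lemma hypergeometric2_seed: "hypergeometric2 (\<lambda>n k. F0_list (seed_point K As k0 ps n k))"
  by (rule hypergeometric2_if_along[where F = "\<lambda>x. wz_term 0 (line_point x)"])
     (simp_all add: F0_list_seed_point hypergeometric_along_wz_term[OF linear_forms_affine_line_point])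

lemma seed_WZ_pair: "WZ_pair (\<lambda>n k. F0_list (seed_point K As k0 ps n k)) wz_mate"
  unfolding WZ_pair_def F0_list_seed_point
  using hypergeometric2_seed hypergeometric2_wz_mate wz_mate_equation by (simp add: F0_list_seed_point)

end

theorem theorem1:
  shows "WZ_seed 6 F0_regular F0_list"
  unfolding WZ_seed_def
proof (intro conjI allI impI)
  show "hypergeometric_in (Suc 6) F0_list"
    using F0_list_hypergeometric by (simp add: numeral_eq_Suc)
  fix K :: int and As :: "int list" and k0 :: complex and ps :: "complex list"
  assume "length As = 6 \<and> length ps = 6 \<and> (\<forall>n k. F0_regular (seed_point K As k0 ps n k))"
  then show "\<exists>G. WZ_pair (\<lambda>n k. F0_list (seed_point K As k0 ps n k)) G"
    using seed_WZ_pair by blast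
qed

end
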